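(* Let $S$ be a set of $n$ pairwise disjoint line segments in the plane, $1\le k\le n-1$, and $s\in S$. Let $V_k(s,S)=\bigcup_{H\subset S,\ |H|=k,\ s\in H}\overline{V_k(H,S)}$. Then $s\subseteq V_k(s,S)$ and $V_k(s,S)$ is weakly star-shaped with respect to $s$: for every point $x\in V_k(s,S)$ there exists a point $y\in s$ such that the whole segment $xy$ is contained in $V_k(s,S)$.
   Context: Distances are Euclidean: $d(x,s)=\min_{q\in s}d(x,q)$. $V_k(H,S)=\{x : d(x,s')<d(x,t)\ \forall s'\in H,\ \forall t\in S\setminus H\}$, and $\overline{X}$ denotes topological closure. *)

theory Defs
  imports "HOL-Analysis.Analysis"
begin

text \<open>Points of the plane are vectors in real^2; a line segment is a nondegenerate
closed segment. Distance from a point to a segment is the library infdist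
(the minimum exists since segments are compact).\<close>

definition is_line_segment :: "(real^2) set \<Rightarrow> bool" where
  "is_line_segment s \<longleftrightarrow> (\<exists>a b. a \<noteq> b \<and> s = closed_segment a b)"

definition Vk_region :: "(real^2) set set \<Rightarrow> (real^2) set set \<Rightarrow> (real^2) set" where
  "Vk_region H S = {x. \<forall>s'\<in>H. \<forall>t\<in>S - H. infdist x s' < infdist x t}"

definition Vk_site :: "nat \<Rightarrow> (real^2) set \<Rightarrow> (real^2) set set \<Rightarrow> (real^2) set" where
  "Vk_site k s S = (\<Union>H\<in>{H. H \<subseteq> S \<and> card H = k \<and> s \<in> H}. closure (Vk_region H S))"

end

theory Submission
  imports Defs
begin

(* Call a set G of sites "strictly nearer" at x if every site of G is
   strictly closer to x than every site of S - G, so that Vk_region H S is exactly the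
   set of points at which H is strictly nearer.  Everything is phrased for a finite
   family of closed, nonempty, pairwise disjoint sites in a Euclidean space.
   (1) Moving x a little towards its nearest point on a site t makes t strictly nearer
       than every site that was at least as far as t; iterating this with the nearest
       remaining site grows a strictly nearer set one site at a time.
   (2) Hence a point z lies in V_k(s,S) as soon as at most k sites are at least as
       close to z as s; conversely a point of V_k(s,S) has fewer than k sites strictly
       closer than s.
   (3) Walking from x towards its nearest point y on s, the only sites that can become
       at least as close as s are those already strictly closer than s at x.
   Together these show that points of s lie in V_k(s,S) and that the whole segment
   from any x in V_k(s,S) to its nearest point on s stays inside V_k(s,S). *)

definition strictly_nearer :: "('a::metric_space) set set \<Rightarrow> 'a set set \<Rightarrow> 'a \<Rightarrow> bool" where
  "strictly_nearer G S x \<longleftrightarrow> (\<forall>a\<in>G. \<forall>b\<in>S - G. infdist x a < infdist x b)"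

definition site_family :: "('a::metric_space) set set \<Rightarrow> bool" where
  "site_family S \<longleftrightarrow> finite S \<and> (\<forall>t\<in>S. closed t \<and> t \<noteq> {}) \<and> pairwise disjnt S"

lemma Vk_region_eq: "Vk_region H S = {x. strictly_nearer H S x}"
  by (simp add: Vk_region_def strictly_nearer_def)

lemma closure_UN_finite:
  assumes "finite I"
  shows "closure (\<Union>i\<in>I. A i) = (\<Union>i\<in>I. closure (A i))"
  using assms by (induction I rule: finite_induct) auto

lemma open_strictly_nearer:
  assumes "finite S" "G \<subseteq> S"
  shows "open {x. strictly_nearer G S x}"
proof -
  have eq: "{x. strictly_nearer G S x} = (\<Inter>a\<in>G. \<Inter>b\<in>S - G. {x. infdist x a < infdist x b})"
    by (auto simp: strictly_nearer_def)
  have "open {x. infdist x a < infdist x b}" for a b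
    by (intro open_Collect_less continuous_on_infdist continuous_on_id)
  then show ?thesis
    unfolding eq using assms finite_subset by (intro open_INT) auto
qed

lemma strictly_nearest_on_own_site:
  assumes "site_family S" "t \<in> S" "p \<in> t" "b \<in> S - {t}"
  shows "infdist p t < infdist p b"
proof -
  have "p \<notin> b" "closed b" "b \<noteq> {}"
    using assms by (auto simp: site_family_def pairwise_def disjnt_def)
  then have "infdist p b > 0" by (rule infdist_pos_not_in_closed[rotated -1])
  then show ?thesis using assms(3) by simp
qed

text \<open>If y is at least as close to x as the closed set b (and y is not in b), then every
  point z strictly between x and y sees y strictly closer than b; this uses strict
  convexity of the Euclidean norm.\<close>
lemma closer_along_segment:
  fixes x y z :: "'a::euclidean_space"
  assumes z: "z \<in> closed_segment x y" "z \<noteq> x"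
    and b: "closed b" "b \<noteq> {}" "y \<notin> b"
    and xy: "dist x y \<le> infdist x b"
  shows "dist z y < infdist z b"
proof (rule ccontr)
  assume "\<not> dist z y < infdist z b"
  then have le: "infdist z b \<le> dist z y" by simp
  obtain q where q: "q \<in> b" "infdist z b = dist z q"
    using infdist_attains_inf[OF b(1,2)] by blast
  have seg: "dist x y = dist x z + dist z y"
    using z(1) between[of x y z] between_mem_segment by blast
  have "dist x y \<le> dist x q" using xy infdist_le[OF q(1), of x] by linarith
  moreover have "dist x q \<le> dist x z + dist z q" by (rule dist_triangle)
  ultimately have e1: "dist x q = dist x z + dist z q" and e2: "dist z q = dist z y"
    using seg le q(2) by linarith+
  have "norm (x - z) *\<^sub>R (z - q) = norm (z - q) *\<^sub>R (x - z)"
    using e1 dist_triangle_eq by blast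
  moreover have "norm (x - z) *\<^sub>R (z - y) = norm (z - y) *\<^sub>R (x - z)"
    using seg dist_triangle_eq by blast
  moreover have "norm (z - q) = norm (z - y)" using e2 by (simp add: dist_norm)
  ultimately have "norm (x - z) *\<^sub>R (z - q) = norm (x - z) *\<^sub>R (z - y)" by simp
  moreover have "norm (x - z) \<noteq> 0" using z(2) by simp
  ultimately have "q = y" by simp
  then show False using q(1) b(3) by simp
qed

lemma approach_site:
  fixes x :: "'a::euclidean_space"
  assumes S: "site_family S" and t: "t \<in> S" and e: "\<epsilon> > 0"
  obtains x' where "dist x x' < \<epsilon>"
    "\<And>b. b \<in> S - {t} \<Longrightarrow> infdist x t \<le> infdist x b \<Longrightarrow> infdist x' t < infdist x' b"
proof -
  have sites: "closed b" "b \<noteq> {}" if "b \<in> S" for b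
    using S that by (auto simp: site_family_def)
  obtain y where y: "y \<in> t" "infdist x t = dist x y"
    using infdist_attains_inf[OF sites[OF t]] by blast
  show ?thesis
  proof (cases "x = y")
    case True
    then show ?thesis
      using that[of x] e strictly_nearest_on_own_site[OF S t] y(1) by auto
  next
    case False
    define r where "r = dist x y"
    define u where "u = min (\<epsilon>/2) r"
    have u: "0 < u" "u \<le> r" "u < \<epsilon>" using False e by (auto simp: u_def r_def)
    define z where "z = x + (u / r) *\<^sub>R (y - x)"
    have z_seg: "z \<in> closed_segment x y"
      unfolding z_def closed_segment_def using u
      by (auto intro!: exI[of _ "u/r"] simp: algebra_simps)
    have dz: "dist x z = u"
      unfolding z_def using u False by (simp add: dist_norm r_def norm_minus_commute)
    show ?thesis
    proof (rule that)
      show "dist x z < \<epsilon>" using dz u by simp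
      fix b assume b: "b \<in> S - {t}" and le: "infdist x t \<le> infdist x b"
      have "y \<notin> b"
        using S t b y(1) by (auto simp: site_family_def pairwise_def disjnt_def)
      then have "dist z y < infdist z b"
        using closer_along_segment[OF z_seg _ sites] b le y(2) dz u by auto
      then show "infdist z t < infdist z b" using infdist_le[OF y(1), of z] by linarith
    qed
  qed
qed

lemma add_nearest_site:
  fixes x :: "'a::euclidean_space"
  assumes S: "site_family S" and G: "G \<subseteq> S" "strictly_nearer G S x"
    and c: "c \<in> S - G" "\<And>b. b \<in> S - G \<Longrightarrow> infdist x c \<le> infdist x b"
    and e: "\<epsilon> > 0"
  obtains x' where "dist x x' < \<epsilon>" "strictly_nearer (insert c G) S x'"
proof -
  have "open {x. strictly_nearer G S x}"
    using S G(1) by (intro open_strictly_nearer) (auto simp: site_family_def)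
  then obtain \<delta> where \<delta>: "\<delta> > 0" "ball x \<delta> \<subseteq> {x. strictly_nearer G S x}"
    using G(2) by (auto elim: openE)
  obtain x' where x': "dist x x' < min \<delta> \<epsilon>"
    "\<And>b. b \<in> S - {c} \<Longrightarrow> infdist x c \<le> infdist x b \<Longrightarrow> infdist x' c < infdist x' b"
    using approach_site[OF S _ , of c "min \<delta> \<epsilon>" x] c(1) \<delta>(1) e by auto
  have "strictly_nearer G S x'" using \<delta>(2) x'(1) by auto
  then have "strictly_nearer (insert c G) S x'"
    using x'(2) c by (auto simp: strictly_nearer_def)
  then show ?thesis using that x'(1) by auto
qed

lemma grow_strictly_nearer:
  fixes x :: "'a::euclidean_space"
  assumes S: "site_family S"
  shows "G \<subseteq> S \<Longrightarrow> strictly_nearer G S x \<Longrightarrow> card G + j \<le> card S \<Longrightarrow> \<epsilon> > 0 \<Longrightarrow>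
    \<exists>x' G'. G \<subseteq> G' \<and> G' \<subseteq> S \<and> card G' = card G + j \<and> dist x x' < \<epsilon> \<and>
      strictly_nearer G' S x'"
proof (induction j arbitrary: x G \<epsilon>)
  case 0
  then show ?case by (intro exI[of _ x] exI[of _ G]) auto
next
  case (Suc j)
  have fin: "finite S" "finite G" using S Suc.prems(1) finite_subset
    by (auto simp: site_family_def)
  have "S - G \<noteq> {}"
  proof
    assume "S - G = {}"
    then have "card S \<le> card G" using fin by (simp add: card_mono)
    then show False using Suc.prems(3) by simp
  qed
  then obtain c where c: "c \<in> S - G" "\<And>b. b \<in> S - G \<Longrightarrow> infdist x c \<le> infdist x b"
    using arg_min_if_finite(1)[of "S - G"] arg_min_least[of "S - G"] fin(1) by blast
  obtain x1 where x1: "dist x x1 < \<epsilon>/2" "strictly_nearer (insert c G) S x1"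
    using add_nearest_site[OF S Suc.prems(1,2) c, of "\<epsilon>/2"] Suc.prems(4) by auto
  have "card (insert c G) = card G + 1" using c(1) fin(2) by simp
  moreover obtain x' G' where "insert c G \<subseteq> G'" "G' \<subseteq> S" "card G' = card (insert c G) + j"
      "dist x1 x' < \<epsilon>/2" "strictly_nearer G' S x'"
    using Suc.IH[of "insert c G" x1 "\<epsilon>/2"] x1(2) Suc.prems c(1) calculation by auto
  moreover have "dist x x' \<le> dist x x1 + dist x1 x'" by (rule dist_triangle)
  ultimately show ?case using x1(1) by (intro exI[of _ x'] exI[of _ G']) auto
qed

text \<open>The sites strictly closer than s form a strictly
  nearer set, s is nearest among the rest, so adding s and then growing to size k
  yields k-subsets H containing s whose regions come arbitrarily close to z.\<close>
lemma Vk_site_if_few_as_near: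
  assumes S: "site_family S" and s: "s \<in> S" and k: "k \<le> card (S :: (real^2) set set)"
    and few: "card {t\<in>S. infdist z t \<le> infdist z s} \<le> k"
  shows "z \<in> Vk_site k s S"
proof -
  have fin: "finite S" using S by (simp add: site_family_def)
  define F where "F = {H. H \<subseteq> S \<and> card H = k \<and> s \<in> H}"
  have "finite F" unfolding F_def using fin by (auto intro: finite_subset[of _ "Pow S"])
  then have site_eq: "Vk_site k s S = closure (\<Union>H\<in>F. Vk_region H S)"
    by (simp add: Vk_site_def F_def closure_UN_finite)
  define B where "B = {t\<in>S. infdist z t < infdist z s}"
  have B: "B \<subseteq> S" "strictly_nearer B S z" "s \<in> S - B"
    using s by (auto simp: B_def strictly_nearer_def)
  have s_nearest: "infdist z s \<le> infdist z b" if "b \<in> S - B" for b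
    using that by (auto simp: B_def)
  have "insert s B \<subseteq> {t\<in>S. infdist z t \<le> infdist z s}"
    using s by (auto simp: B_def)
  then have "card (insert s B) \<le> card {t\<in>S. infdist z t \<le> infdist z s}"
    using fin by (intro card_mono) auto
  then have card_sB: "card (insert s B) \<le> k" using few by linarith
  have "\<exists>y\<in>(\<Union>H\<in>F. Vk_region H S). dist y z < \<epsilon>" if e: "\<epsilon> > 0" for \<epsilon>
  proof -
    obtain x1 where x1: "dist z x1 < \<epsilon>/2" "strictly_nearer (insert s B) S x1"
      using add_nearest_site[OF S B(1,2,3) s_nearest, of "\<epsilon>/2"] e by auto
    obtain x' G where G: "insert s B \<subseteq> G" "G \<subseteq> S" "card G = k"
        "dist x1 x' < \<epsilon>/2" "strictly_nearer G S x'"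
      using grow_strictly_nearer[OF S, of "insert s B" x1 "k - card (insert s B)" "\<epsilon>/2"]
        B s x1(2) card_sB k e by auto
    have "G \<in> F" "x' \<in> Vk_region G S"
      using G by (auto simp: F_def Vk_region_eq)
    moreover have "dist x' z < \<epsilon>"
      using dist_triangle[of z x' x1] x1(1) G(4) by (simp add: dist_commute)
    ultimately show ?thesis by blast
  qed
  then show ?thesis unfolding site_eq closure_approachable by blast
qed

text \<open>A site strictly closer than s at a point of the closed region of H must itself
  belong to H: off H, the region lies in the closed set where s is at least as close.\<close>
lemma nearer_site_in_closure_region:
  assumes x: "x \<in> closure (Vk_region H S)" and "s \<in> H" "t \<in> S"
    and nearer: "infdist x t < infdist x s"
  shows "t \<in> H"
proof (rule ccontr)
  assume "t \<notin> H"
  then have "Vk_region H S \<subseteq> {w. infdist w s \<le> infdist w t}"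
    using assms(2,3) by (auto simp: Vk_region_def intro: less_imp_le)
  moreover have "closed {w. infdist w s \<le> infdist w t}"
    by (intro closed_Collect_le continuous_on_infdist continuous_on_id)
  ultimately have "closure (Vk_region H S) \<subseteq> {w. infdist w s \<le> infdist w t}"
    by (rule closure_minimal)
  then show False using x nearer by auto
qed

lemma few_nearer_in_Vk_site:
  assumes fin: "finite S" and x: "x \<in> Vk_site k s S"
  shows "card {t\<in>S. infdist x t < infdist x s} < k"
proof -
  obtain H where H: "H \<subseteq> S" "card H = k" "s \<in> H" "x \<in> closure (Vk_region H S)"
    using x unfolding Vk_site_def by blast
  have "{t\<in>S. infdist x t < infdist x s} \<subseteq> H - {s}"
    using nearer_site_in_closure_region[OF H(4) H(3)] by auto
  moreover have "finite H" using H(1) fin finite_subset by blast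
  ultimately have "card {t\<in>S. infdist x t < infdist x s} \<le> card (H - {s})"
    by (intro card_mono) auto
  also have "\<dots> < card H"
    using \<open>finite H\<close> H(3) by (rule card_Diff1_less)
  finally show ?thesis using H(2) by simp
qed

lemma as_near_along_segment:
  fixes x y z :: "'a::euclidean_space"
  assumes S: "site_family S" and s: "s \<in> S" and y: "y \<in> s" "infdist x s = dist x y"
    and z: "z \<in> closed_segment x y" "z \<noteq> x"
  shows "{t\<in>S. infdist z t \<le> infdist z s} \<subseteq> insert s {t\<in>S. infdist x t < infdist x s}"
proof
  fix t assume t: "t \<in> {t\<in>S. infdist z t \<le> infdist z s}"
  show "t \<in> insert s {t\<in>S. infdist x t < infdist x s}"
  proof (rule ccontr)
    assume nt: "t \<notin> insert s {t\<in>S. infdist x t < infdist x s}"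
    have "closed t" "t \<noteq> {}" "y \<notin> t"
      using S s t nt y(1) by (auto simp: site_family_def pairwise_def disjnt_def)
    moreover have "dist x y \<le> infdist x t" using t nt y(2) by auto
    ultimately have "dist z y < infdist z t" using closer_along_segment[OF z] by blast
    then show False using t infdist_le[OF y(1), of z] by auto
  qed
qed

text \<open>Points of a site s belong to V_k(s,S) for every 1 \<le> k \<le> |S|: only s itself is
  at least as close to them as s.\<close>
lemma site_subset_Vk_site:
  assumes S: "site_family S" and s: "s \<in> (S :: (real^2) set set)" and k: "1 \<le> k" "k \<le> card S"
  shows "s \<subseteq> Vk_site k s S"
proof
  fix p assume p: "p \<in> s"
  have "{t\<in>S. infdist p t \<le> infdist p s} \<subseteq> {s}"
    using strictly_nearest_on_own_site[OF S s p] by (auto simp: not_less[symmetric])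
  then have "card {t\<in>S. infdist p t \<le> infdist p s} \<le> card {s}"
    by (intro card_mono) auto
  then have "card {t\<in>S. infdist p t \<le> infdist p s} \<le> k" using k(1) by simp
  then show "p \<in> Vk_site k s S" by (rule Vk_site_if_few_as_near[OF S s k(2)])
qed

lemma segment_to_nearest_point_in_Vk_site:
  assumes S: "site_family S" and s: "s \<in> (S :: (real^2) set set)" and k: "k \<le> card S"
    and x: "x \<in> Vk_site k s S" and y: "y \<in> s" "infdist x s = dist x y"
  shows "closed_segment x y \<subseteq> Vk_site k s S"
proof
  fix z assume z: "z \<in> closed_segment x y"
  have fin: "finite S" using S by (simp add: site_family_def)
  show "z \<in> Vk_site k s S"
  proof (cases "z = x")
    case True
    then show ?thesis using x by simp
  next
    case False
    let ?B = "{t\<in>S. infdist x t < infdist x s}"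
    have "card {t\<in>S. infdist z t \<le> infdist z s} \<le> card (insert s ?B)"
      using as_near_along_segment[OF S s y z False] fin by (intro card_mono) auto
    also have "\<dots> \<le> Suc (card ?B)" by (rule card_insert_le_m1) simp_all
    also have "\<dots> \<le> k" using few_nearer_in_Vk_site[OF fin x] by simp
    finally show ?thesis by (rule Vk_site_if_few_as_near[OF S s k])
  qed
qed

lemma site_family_segments:
  assumes "finite S" "\<forall>t\<in>S. is_line_segment t"
    and "\<forall>t1\<in>S. \<forall>t2\<in>S. t1 \<noteq> t2 \<longrightarrow> t1 \<inter> t2 = {}"
  shows "site_family S"
proof -
  have "closed t \<and> t \<noteq> {}" if "is_line_segment t" for t
    using that unfolding is_line_segment_def by (metis closed_segment ends_in_segment(1) empty_iff)
  then show ?thesis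
    using assms unfolding site_family_def pairwise_def disjnt_def by blast
qed

theorem lemma4:
  fixes S :: "(real^2) set set" and n k :: nat and s :: "(real^2) set"
  assumes "finite S" and "card S = n"
    and "\<forall>t\<in>S. is_line_segment t"
    and "\<forall>t1\<in>S. \<forall>t2\<in>S. t1 \<noteq> t2 \<longrightarrow> t1 \<inter> t2 = {}"
    and "1 \<le> k" and "k \<le> n - 1"
    and "s \<in> S"
  shows "s \<subseteq> Vk_site k s S \<and>
         (\<forall>x\<in>Vk_site k s S. \<exists>y\<in>s. closed_segment x y \<subseteq> Vk_site k s S)"
proof -
  have S: "site_family S" using site_family_segments assms(1,3,4) by blast
  have k: "k \<le> card S" using assms(2,6) by linarith
  have "\<exists>y\<in>s. closed_segment x y \<subseteq> Vk_site k s S" if x: "x \<in> Vk_site k s S" for x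
  proof -
    obtain y where y: "y \<in> s" "infdist x s = dist x y"
      using S assms(7) infdist_attains_inf[of s x] by (auto simp: site_family_def)
    then show ?thesis using segment_to_nearest_point_in_Vk_site[OF S assms(7) k x] by blast
  qed
  then show ?thesis using site_subset_Vk_site[OF S assms(7) assms(5) k] by blast
qed

end
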